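(* For every integer $k\ge 0$ and every list $L$ of $k$ pairwise distinct elements, running $\mathrm{Permutations}(L,0,\mathrm{Func})$ calls $\mathrm{Func}$ exactly $k!$ times, and the lists passed to $\mathrm{Func}$ are exactly the $k!$ permutations (orderings) of the elements of $L$, each occurring exactly once.
   Context: Lists are 0-indexed. For a list $L$, $\mathrm{extract}(L,j)$ removes the element at position $j$ from $L$ and returns it; $\mathrm{Insert}(L,i,x)$ inserts $x$ into $L$ so that it occupies position $i$, shifting the elements previously at positions $\ge i$ one step to the right. Each combined operation $\mathrm{Insert}(L,i,\mathrm{extract}(L,j))$ first extracts, then inserts, so the length of $L$ is unchanged. The recursive procedure $\mathrm{Permutations}(L,i,\mathrm{Func})$ (with $\mathrm{Func}$ a callback applied to the current state of the list) is: let $n=\mathrm{length}(L)$. If $i\ge n-1$, call $\mathrm{Func}(L)$. Otherwise: (1) call $\mathrm{Permutations}(L,i+1,\mathrm{Func})$; (2) do $\mathrm{Insert}(L,i,\mathrm{extract}(L,i+1))$ and call $\mathrm{Permutations}(L,i+1,\mathrm{Func})$; (3) repeat $\max(n-i-3,0)$ times: if $n-i$ is even, do $\mathrm{Insert}(L,i,\mathrm{extract}(L,n-1))$, otherwise do $\mathrm{Insert}(L,i,\mathrm{extract}(L,i+1))$; then call $\mathrm{Permutations}(L,i+1,\mathrm{Func})$; (4) if $n-i>2$: do $\mathrm{Insert}(L,i,\mathrm{extract}(L,i+1))$ and call $\mathrm{Permutations}(L,i+1,\mathrm{Func})$. *)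

theory Defs
  imports Main "HOL-Library.Multiset"
begin

definition list_extract :: "'a list \<Rightarrow> nat \<Rightarrow> 'a \<times> 'a list" where
  "list_extract L j = (L ! j, take j L @ drop (Suc j) L)"

definition insert_at :: "'a list \<Rightarrow> nat \<Rightarrow> 'a \<Rightarrow> 'a list" where
  "insert_at L i x = take i L @ x # drop i L"

definition move :: "'a list \<Rightarrow> nat \<Rightarrow> nat \<Rightarrow> 'a list" where
  "move L i j = (let (x, L') = list_extract L j in insert_at L' i x)"

(* The recursive procedure, with an explicit fuel argument (to make it a total primitive
  recursive function).  perm_go f i L returns the final state of the list together with
  the sequence (in calling order) of the lists passed to Func. *)
primrec perm_go :: "nat \<Rightarrow> nat \<Rightarrow> 'a list \<Rightarrow> 'a list \<times> 'a list list" where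
  "perm_go 0 i L = (L, [])"
| "perm_go (Suc f) i L =
     (let n = length L in
      if n \<le> i + 1 then (L, [L])
      else
        (let step = (\<lambda>j (M :: 'a list, out :: 'a list list).
                        let (M', out') = perm_go f (i + 1) (move M i j) in (M', out @ out'));
             s1 = perm_go f (i + 1) L;
             s2 = step (i + 1) s1;
             s3 = (step (if even (n - i) then n - 1 else i + 1) ^^ (n - i - 3)) s2
         in if n - i > 2 then step (i + 1) s3 else s3))"

(* Permutations(L,0,Func): the list of arguments passed to Func, in calling order.
  The fuel length L + 1 exceeds the recursion depth. *)
definition perm_calls :: "'a list \<Rightarrow> 'a list list" where
  "perm_calls L = snd (perm_go (Suc (length L)) 0 L)"

end

theory Submission
  imports Defs "HOL-Combinatorics.Permutations" "HOL-Combinatorics.Multiset_Permutations"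
begin

text \<open>
  A call at level i only touches the suffix from position i on and treats it exactly as a
  call at level 0 treats that suffix as a list of its own. A level-0 call on a list of length
  m runs m blocks, each a move of one entry to the front followed by the level-1 call on the
  remaining m - 1 positions. By induction on m, the call (1) leaves the list rearranged by an
  index map net_index m that does not depend on the entries and (2) passes every ordering of
  the list to Func exactly once. Granting (1) for m - 1, every intermediate state is the list
  rearranged by an explicit index map, so the entry in front during block k is
  L ! (head_indices m ! k) and the final state is the list rearranged by final_index m. The
  heart of the proof is arithmetic on these maps: head_indices m lists 0, ..., m - 1 in some
  order (for odd m because the map between consecutive blocks is an m-cycle) and final_index
  m agrees with net_index m. So the blocks start with pairwise distinct entries that exhaust
  L, and by (2) for m - 1 they enumerate the orderings starting with these entries.
\<close>

section \<open>Lists rearranged by index maps\<close>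

lemma permute_list_cong:
  "(\<And>q. q < length xs \<Longrightarrow> f q = g q) \<Longrightarrow> permute_list f xs = permute_list g xs"
  by (simp add: permute_list_def)

lemma permute_list_permute_list:
  "(\<And>q. q < length xs \<Longrightarrow> g q < length xs) \<Longrightarrow>
    permute_list g (permute_list f xs) = permute_list (f \<circ> g) xs"
  by (simp add: permute_list_def)

lemma hd_permute_list: "xs \<noteq> [] \<Longrightarrow> hd (permute_list f xs) = xs ! f 0"
  by (simp add: permute_list_def hd_map upt_conv_Cons)

lemma Cons_permute_list:
  "x # permute_list f xs = permute_list (\<lambda>q. case q of 0 \<Rightarrow> 0 | Suc p \<Rightarrow> Suc (f p)) (x # xs)"
  by (simp add: permute_list_def upt_conv_Cons map_Suc_upt[symmetric] del: upt_Suc)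

definition front_index :: "nat \<Rightarrow> nat \<Rightarrow> nat" where
  "front_index j q = (if q = 0 then j else if q \<le> j then q - 1 else q)"

lemma move_0: "move M 0 j = M ! j # take j M @ drop (Suc j) M"
  by (simp add: move_def list_extract_def insert_at_def)

lemma move_0_eq_permute_list: "j < length M \<Longrightarrow> move M 0 j = permute_list (front_index j) M"
  unfolding move_0 permute_list_def
  by (rule nth_equalityI) (auto simp: nth_Cons' nth_append front_index_def min_def)

lemma move_append: "move (p @ M) (i + length p) (j + length p) = p @ move M i j"
  by (simp add: move_def list_extract_def insert_at_def nth_append)

lemma mset_move:
  assumes "j < length M"
  shows "mset (move M i j) = mset M"
proof -
  define M' where "M' = take j M @ drop (Suc j) M"
  have "mset M = add_mset (M ! j) (mset M')"
    using id_take_nth_drop[OF assms]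
    by (metis M'_def mset.simps(2) mset_append union_mset_add_mset_right)
  moreover have "mset (move M i j) = add_mset (M ! j) (mset (take i M' @ drop i M'))"
    by (simp add: move_def list_extract_def insert_at_def M'_def)
  ultimately show ?thesis
    by simp
qed

section \<open>Unfolding the recursion\<close>

lemma funpow_commute_map:
  "(\<And>s. g (h s) = h (g' s)) \<Longrightarrow> (g ^^ k) (h s) = h ((g' ^^ k) s)"
  by (induction k) simp_all

lemma funpow_accumulate:
  assumes "\<And>s. G s = (\<phi> (fst s), snd s @ C (fst s))"
  shows "(G ^^ k) s = ((\<phi> ^^ k) (fst s), snd s @ concat (map (\<lambda>t. C ((\<phi> ^^ t) (fst s))) [0..<k]))"
  by (induction k) (simp_all add: assms)

definition perm_step :: "nat \<Rightarrow> nat \<Rightarrow> nat \<Rightarrow> 'a list \<times> 'a list list \<Rightarrow> 'a list \<times> 'a list list" where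
  "perm_step f i j s = (let r = perm_go f (i + 1) (move (fst s) i j) in (fst r, snd s @ snd r))"

lemma perm_go_Suc_base: "length L \<le> i + 1 \<Longrightarrow> perm_go (Suc f) i L = (L, [L])"
  by simp

lemma perm_go_Suc:
  assumes "i + 1 < length L"
  shows "perm_go (Suc f) i L =
    (let s = perm_step f i (i + 1) (perm_go f (i + 1) L);
         s' = (perm_step f i (if even (length L - i) then length L - 1 else i + 1)
                ^^ (length L - i - 3)) s
     in if 2 < length L - i then perm_step f i (i + 1) s' else s')"
proof -
  have "(\<lambda>j (M :: 'a list, out :: 'a list list).
      let (M', out') = perm_go f (i + 1) (move M i j) in (M', out @ out')) = perm_step f i"
    by (auto simp: fun_eq_iff perm_step_def Let_def split: prod.split)
  then show ?thesis
    using assms unfolding perm_go.simps by (simp add: Let_def)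
qed

declare perm_go.simps(2) [simp del]

lemma perm_go_append:
  "perm_go f (i + length p) (p @ M) = map_prod ((@) p) (map ((@) p)) (perm_go f i M)"
proof (induction f arbitrary: i M)
  case (Suc f)
  have step: "perm_step f (i + length p) (j + length p) (map_prod ((@) p) (map ((@) p)) s)
      = map_prod ((@) p) (map ((@) p)) (perm_step f i j s)" for j s
  proof -
    have "perm_go f (i + length p + 1) (move (p @ fst s) (i + length p) (j + length p))
        = map_prod ((@) p) (map ((@) p)) (perm_go f (i + 1) (move (fst s) i j))"
      using Suc.IH[of "i + 1" "move (fst s) i j"]
      by (simp add: move_append add.commute add.left_commute)
    then show ?thesis
      by (simp add: perm_step_def Let_def)
  qed
  have iter: "(perm_step f (i + length p) (j + length p) ^^ k) (map_prod ((@) p) (map ((@) p)) s)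
      = map_prod ((@) p) (map ((@) p)) ((perm_step f i j ^^ k) s)" for j k s
    by (rule funpow_commute_map) (rule step)
  show ?case
  proof (cases "length M \<le> i + 1")
    case False
    have pivot_shift:
      "(if even (length (p @ M) - (i + length p)) then length (p @ M) - 1 else i + length p + 1)
        = (if even (length M - i) then length M - 1 else i + 1) + length p"
      using False by auto
    have start: "perm_go f (i + length p + 1) (p @ M)
        = map_prod ((@) p) (map ((@) p)) (perm_go f (i + 1) M)"
      using Suc.IH[of "i + 1" M] by (simp add: add.commute add.left_commute)
    have shift: "i + length p + 1 = (i + 1) + length p"
      by simp
    have lt: "i + length p + 1 < length (p @ M)" "i + 1 < length M"
      using False by auto
    show ?thesis
      using False
      by (simp only: perm_go_Suc[OF lt(1)] perm_go_Suc[OF lt(2)] Let_def pivot_shift start)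
         (simp only: shift step iter, simp)
  qed (simp add: perm_go_Suc_base)
qed simp

lemma perm_go_1_Cons: "perm_go f 1 (x # xs) = map_prod ((#) x) (map ((#) x)) (perm_go f 0 xs)"
proof -
  have "(@) [x] = (#) x"
    by (simp add: fun_eq_iff)
  then show ?thesis
    using perm_go_append[of f 0 "[x]" xs] by simp
qed

lemma mset_fst_perm_go: "mset (fst (perm_go f i L)) = mset L"
proof (induction f arbitrary: i L)
  case (Suc f)
  have step: "mset (fst (perm_step f i j s)) = mset L"
    if "mset (fst s) = mset L" "j < length L" for j s
  proof -
    have "j < length (fst s)"
      using that by (metis size_mset)
    then show ?thesis
      using Suc.IH[of "i + 1" "move (fst s) i j"] that(1) mset_move[of j "fst s" i]
      by (simp add: perm_step_def Let_def)
  qed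
  have iter: "mset (fst ((perm_step f i j ^^ k) s)) = mset L"
    if "mset (fst s) = mset L" "j < length L" for j k s
    using that by (induction k) (simp_all add: step)
  show ?case
  proof (cases "length L \<le> i + 1")
    case False
    then have lt: "i + 1 < length L"
        "(if even (length L - i) then length L - 1 else i + 1) < length L"
      by auto
    show ?thesis
      unfolding perm_go_Suc[OF lt(1)] Let_def using Suc.IH[of "i + 1" L] lt by (simp add: step iter)
  qed (simp add: perm_go_Suc_base)
qed simp

section \<open>The top-level call as a sequence of blocks\<close>

definition level_step :: "nat \<Rightarrow> nat \<Rightarrow> 'a list \<Rightarrow> 'a list" where
  "level_step f j M = fst (perm_go f 1 (move M 0 j))"

definition pivot :: "nat \<Rightarrow> nat" where
  "pivot m = (if even m then m - 1 else 1)"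

definition block_starts :: "nat \<Rightarrow> 'a list \<Rightarrow> 'a list list" where
  "block_starts f L =
    (let m = length L; X = fst (perm_go f 1 L);
         Z = (\<lambda>t. (level_step f (pivot m) ^^ t) (level_step f 1 X))
     in L # move X 0 1 # map (\<lambda>t. move (Z t) 0 (pivot m)) [0..<m - 3]
        @ (if 2 < m then [move (Z (m - 3)) 0 1] else []))"

definition final_state :: "nat \<Rightarrow> 'a list \<Rightarrow> 'a list" where
  "final_state f L =
    (let m = length L; Y = level_step f 1 (fst (perm_go f 1 L))
     in if 2 < m then level_step f 1 ((level_step f (pivot m) ^^ (m - 3)) Y) else Y)"

lemma perm_go_Suc_0:
  assumes "2 \<le> length L"
  shows "perm_go (Suc f) 0 L =
    (final_state f L, concat (map (\<lambda>M. snd (perm_go f 1 M)) (block_starts f L)))"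
proof -
  have step: "perm_step f 0 j s =
      (level_step f j (fst s), snd s @ snd (perm_go f 1 (move (fst s) 0 j)))" for j s
    by (simp add: perm_step_def level_step_def Let_def)
  have iter: "(perm_step f 0 j ^^ k) s = ((level_step f j ^^ k) (fst s),
      snd s @ concat (map (\<lambda>t. snd (perm_go f 1 (move ((level_step f j ^^ t) (fst s)) 0 j)))
        [0..<k]))"
    for j k s
    by (rule funpow_accumulate) (rule step)
  have J: "(if even (length L - 0) then length L - 1 else 0 + 1) = pivot (length L)"
    by (simp add: pivot_def)
  have lt: "0 + 1 < length L"
    using assms by simp
  show ?thesis
    unfolding perm_go_Suc[OF lt] Let_def J
    by (simp add: step iter block_starts_def final_state_def Let_def comp_def)
qed

lemma mset_block_starts:
  assumes "M \<in> set (block_starts f L)" "2 \<le> length L"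
  shows "mset M = mset L"
proof -
  have move: "mset (move X 0 j) = mset L" if "mset X = mset L" "j < length L" for j X
    using that mset_move[of j X 0] by (metis size_mset)
  have step: "mset (level_step f j X) = mset L" if "mset X = mset L" "j < length L" for j X
    using move[OF that] mset_fst_perm_go[of f 1 "move X 0 j"] by (simp add: level_step_def)
  have iter: "mset ((level_step f j ^^ t) X) = mset L" if "mset X = mset L" "j < length L" for j t X
    using that by (induction t) (simp_all add: step)
  have "pivot (length L) < length L" "1 < length L"
    using assms(2) by (auto simp: pivot_def)
  then show ?thesis
    using assms(1) mset_fst_perm_go[of f 1 L]
    by (auto simp: block_starts_def Let_def move step iter split: if_splits)
qed

section \<open>Index arithmetic\<close>

text \<open>Permutations(L, i) with m = length L - i replaces the suffix xs starting at i by
  permute_list (net_index m) xs (see fst_perm_go_0).\<close>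

definition net_index :: "nat \<Rightarrow> nat \<Rightarrow> nat" where
  "net_index m q =
    (if m = 1 then q
     else if odd m \<or> m = 2 then (if q = 0 then 1 else if q = 1 then 0 else q)
     else if m = 4 then (if q < 3 then q + 1 else 0)
     else if q = 0 then 1 else if q = 1 then 4 else if q = 2 then 3
     else if q \<le> m - 3 then q + 2 else if q = m - 2 then 2 else 0)"

definition inner_index :: "nat \<Rightarrow> nat \<Rightarrow> nat" where
  "inner_index m q = (case q of 0 \<Rightarrow> 0 | Suc p \<Rightarrow> Suc (net_index (m - 1) p))"

definition step_index :: "nat \<Rightarrow> nat \<Rightarrow> nat \<Rightarrow> nat" where
  "step_index m j q = front_index j (inner_index m q)"

lemma net_index_less: "q < m \<Longrightarrow> net_index m q < m"
  by (auto simp: net_index_def)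

lemma inner_index_less:
  assumes "q < m"
  shows "inner_index m q < m"
proof (cases q)
  case (Suc p)
  then have "net_index (m - 1) p < m - 1"
    using assms by (simp add: net_index_less)
  then show ?thesis
    using Suc by (simp add: inner_index_def)
qed (use assms in \<open>simp add: inner_index_def\<close>)

lemma step_index_less: "q < m \<Longrightarrow> j < m \<Longrightarrow> step_index m j q < m"
  by (auto simp: step_index_def front_index_def dest: inner_index_less)

lemma funpow_step_index_less: "q < m \<Longrightarrow> j < m \<Longrightarrow> (step_index m j ^^ t) q < m"
  by (induction t) (simp_all add: step_index_less)

lemma pivot_less: "2 \<le> m \<Longrightarrow> pivot m < m"
  by (simp add: pivot_def)

definition head_indices :: "nat \<Rightarrow> nat list" where
  "head_indices m =
    0 # inner_index m 1
    # map (\<lambda>t. inner_index m (step_index m 1 ((step_index m (pivot m) ^^ t) (pivot m)))) [0..<m - 3]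
    @ (if 2 < m then [inner_index m (step_index m 1 ((step_index m (pivot m) ^^ (m - 3)) 1))]
       else [])"

definition final_index :: "nat \<Rightarrow> nat \<Rightarrow> nat" where
  "final_index m q =
    inner_index m (step_index m 1
      (if 2 < m then (step_index m (pivot m) ^^ (m - 3)) (step_index m 1 q) else q))"

lemma net_index_odd: "odd m \<Longrightarrow> m \<noteq> 1 \<Longrightarrow> net_index m q = (if q = 0 then 1 else if q = 1 then 0 else q)"
  by (simp add: net_index_def)

lemma inner_index_even:
  assumes "even m" "4 \<le> m"
  shows "inner_index m q = (if q = 1 then 2 else if q = 2 then 1 else q)"
proof -
  have "odd (m - 1)" "m - 1 \<noteq> 1"
    using assms by auto
  then show ?thesis
    by (cases q) (auto simp: inner_index_def net_index_odd)
qed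

lemma step_index_1_even:
  "even m \<Longrightarrow> 4 \<le> m \<Longrightarrow>
    step_index m 1 q = (if q = 0 then 1 else if q = 1 then 2 else if q = 2 then 0 else q)"
  by (simp add: step_index_def inner_index_even front_index_def)

lemma step_index_pivot_even:
  "even m \<Longrightarrow> 4 \<le> m \<Longrightarrow> q < m \<Longrightarrow>
    step_index m (m - 1) q =
      (if q = 0 then m - 1 else if q = 1 then 1 else if q = 2 then 0 else q - 1)"
  by (auto simp: step_index_def inner_index_even front_index_def)

text \<open>For even m, step_index m (m - 1) fixes 1 and runs through the cycle
  0, m - 1, m - 2, ..., 3, 2 of length m - 1.\<close>

lemma funpow_step_index_pivot_even:
  assumes "even m" "4 \<le> m" "q < m"
  shows "t \<le> m - 3 \<Longrightarrow> (step_index m (m - 1) ^^ t) q =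
    (if q = 1 then 1 else if q = 0 then (if t = 0 then 0 else m - t)
     else if t + 2 \<le> q then q - t else if t + 1 = q then 0 else m - 1 + q - t)"
proof (induction t)
  case (Suc t)
  let ?x = "(step_index m (m - 1) ^^ t) q"
  have x: "?x = (if q = 1 then 1 else if q = 0 then (if t = 0 then 0 else m - t)
     else if t + 2 \<le> q then q - t else if t + 1 = q then 0 else m - 1 + q - t)"
    using Suc by simp
  have "(step_index m (m - 1) ^^ Suc t) q = step_index m (m - 1) ?x"
    by simp
  also have "\<dots> = (if ?x = 0 then m - 1 else if ?x = 1 then 1 else if ?x = 2 then 0 else ?x - 1)"
    by (rule step_index_pivot_even) (use assms Suc x in auto)
  finally have step: "(step_index m (m - 1) ^^ Suc t) q =
      (if ?x = 0 then m - 1 else if ?x = 1 then 1 else if ?x = 2 then 0 else ?x - 1)" .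
  consider "q = 1" | "q = 0" | "t + 3 \<le> q" | "2 \<le> q" "t + 2 = q" | "2 \<le> q" "t + 1 = q"
    | "2 \<le> q" "q \<le> t"
    by linarith
  then show ?case
    unfolding step x by cases (use assms Suc.prems in auto)
qed simp

lemma head_indices_even:
  assumes "even m" "4 \<le> m"
  shows "head_indices m = 0 # 2 # map (\<lambda>t. m - 1 - t) [0..<m - 3] @ [1]"
proof -
  have J: "pivot m = m - 1"
    using assms by (simp add: pivot_def)
  have mid: "inner_index m (step_index m 1 ((step_index m (m - 1) ^^ t) (m - 1))) = m - 1 - t"
    if "t < m - 3" for t
  proof -
    have "(step_index m (m - 1) ^^ t) (m - 1) = m - 1 - t"
      using funpow_step_index_pivot_even[OF assms, of "m - 1" t] that assms by auto
    then show ?thesis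
      using that unfolding step_index_1_even[OF assms] inner_index_even[OF assms] by auto
  qed
  have "(step_index m (m - 1) ^^ (m - 3)) 1 = 1"
    using funpow_step_index_pivot_even[OF assms, of 1 "m - 3"] assms by simp
  then have last: "inner_index m (step_index m 1 ((step_index m (m - 1) ^^ (m - 3)) 1)) = 1"
    unfolding step_index_1_even[OF assms] inner_index_even[OF assms] by simp
  have "map (\<lambda>t. inner_index m (step_index m 1 ((step_index m (m - 1) ^^ t) (m - 1)))) [0..<m - 3]
      = map (\<lambda>t. m - 1 - t) [0..<m - 3]"
    using mid by simp
  then show ?thesis
    using assms last by (simp add: head_indices_def J inner_index_even)
qed

lemma final_index_even:
  assumes "even m" "4 \<le> m" "q < m"
  shows "final_index m q = net_index m q"
proof -
  define A where "A = step_index m 1"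
  define P where "P = step_index m (m - 1) ^^ (m - 3)"
  have A: "A x = (if x = 0 then 1 else if x = 1 then 2 else if x = 2 then 0 else x)" for x
    unfolding A_def by (rule step_index_1_even[OF assms(1,2)])
  have P: "P y = (if y = 1 then 1 else if y = 0 then 3 else if y = m - 1 then 2
      else if y = m - 2 then 0 else y + 2)" if y: "y < m" for y
  proof -
    consider "y = 0" | "y = 1" | "2 \<le> y" "y \<le> m - 3" | "y = m - 2" | "y = m - 1"
      using y assms(2) by linarith
    then show ?thesis
      unfolding P_def funpow_step_index_pivot_even[OF assms(1,2) y order_refl]
      by cases (use assms in auto)
  qed
  have N: "net_index m x = (if m = 4 then (if x < 3 then x + 1 else 0)
      else if x = 0 then 1 else if x = 1 then 4 else if x = 2 then 3
      else if x \<le> m - 3 then x + 2 else if x = m - 2 then 2 else 0)" for x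
    using assms by (simp add: net_index_def)
  have I: "inner_index m x = (if x = 1 then 2 else if x = 2 then 1 else x)" for x
    by (rule inner_index_even[OF assms(1,2)])
  have fin: "final_index m q = inner_index m (A (P (A q)))"
    using assms by (simp add: final_index_def pivot_def A_def P_def)
  consider "q = 0" | "q = 1" | "q = 2" | "3 \<le> q" "q \<le> m - 3" | "3 \<le> q" "q = m - 2"
    | "3 \<le> q" "q = m - 1"
    using assms(3) by linarith
  then show ?thesis
    unfolding fin by cases (use assms(1,2) in \<open>auto simp: A P I N\<close>)
qed

lemma distinct_set_eq_lessThan:
  "distinct xs \<Longrightarrow> set xs \<subseteq> {..<length xs} \<Longrightarrow> set xs = {..<length xs}"
  by (simp add: card_subset_eq distinct_card)

lemma head_indices_perm_even:
  assumes "even m" "4 \<le> m"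
  shows "distinct (head_indices m) \<and> set (head_indices m) = {..<m}"
proof -
  have "distinct (head_indices m)" "set (head_indices m) \<subseteq> {..<m}" "length (head_indices m) = m"
    using assms by (auto simp: head_indices_even distinct_map inj_on_def)
  then show ?thesis
    using distinct_set_eq_lessThan by metis
qed

lemma net_index_even:
  assumes "even m" "6 \<le> m"
  shows "net_index m q =
    (if q = 0 then 1 else if q = 1 then 4 else if q = 2 then 3
     else if q \<le> m - 3 then q + 2 else if q = m - 2 then 2 else 0)"
  using assms by (simp add: net_index_def)

lemma step_index_odd:
  assumes "odd m" "7 \<le> m" "q < m"
  shows "step_index m 1 q =
    (if q = 0 then 1 else if q = 1 then 2 else if q = 2 then 5 else if q = 3 then 4
     else if q \<le> m - 3 then q + 2 else if q = m - 2 then 3 else 0)"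
proof (cases q)
  case (Suc p)
  have net: "net_index (m - 1) p =
      (if p = 0 then 1 else if p = 1 then 4 else if p = 2 then 3
       else if p \<le> m - 4 then p + 2 else if p = m - 3 then 2 else 0)"
    using assms by (simp add: net_index_even diff_diff_add)
  consider "p = 0" | "p = 1" | "p = 2" | "3 \<le> p" "p \<le> m - 4" | "p = m - 3" | "p = m - 2"
    using assms Suc by linarith
  then show ?thesis
    unfolding step_index_def inner_index_def Suc nat.case(2) net
    by cases (use assms Suc in \<open>auto simp: front_index_def\<close>)
qed (simp add: step_index_def inner_index_def front_index_def)

lemma set_orbit_eq_lessThan:
  fixes g :: "nat \<Rightarrow> nat"
  assumes "\<And>q. q < m \<Longrightarrow> g q < m" "x < m" "distinct (map (\<lambda>k. (g ^^ k) x) [0..<m])"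
  shows "set (map (\<lambda>k. (g ^^ k) x) [0..<m]) = {..<m}"
proof -
  have "(g ^^ k) x < m" for k
    by (induction k) (simp_all add: assms(1,2))
  then have "set (map (\<lambda>k. (g ^^ k) x) [0..<m]) \<subseteq> {..<m}"
    by auto
  moreover have "card (set (map (\<lambda>k. (g ^^ k) x) [0..<m])) = card {..<m}"
    using distinct_card[OF assms(3)] by simp
  ultimately show ?thesis
    by (simp add: card_subset_eq)
qed

lemma funpow_eq_self_if_orbit:
  assumes "set (map (\<lambda>k. (g ^^ k) x) [0..<m]) = {..<m}" "(g ^^ m) x = x" "q < m"
  shows "(g ^^ m) q = q"
proof -
  obtain k where k: "q = (g ^^ k) x"
    using assms(1,3) by auto
  then have "(g ^^ m) q = (g ^^ k) ((g ^^ m) x)"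
    by (metis add.commute comp_apply funpow_add)
  then show ?thesis
    using assms(2) k by simp
qed

lemma step_index_orbit_odd:
  assumes "odd m" "3 \<le> m"
  shows "distinct (map (\<lambda>k. (step_index m 1 ^^ k) 1) [0..<m]) \<and> (step_index m 1 ^^ m) 1 = 1"
proof -
  obtain r where m: "m = 2 * r + 1"
    using assms(1) oddE by blast
  consider "r = 1" | "r = 2" | "3 \<le> r"
    using assms(2) m by linarith
  then show ?thesis
  proof cases
    case 1
    then show ?thesis
      by (simp add: m step_index_def inner_index_def net_index_def front_index_def numeral_eq_Suc
          upt_rec)
  next
    case 2
    txt \<open>The parity of 4 in the unary form produced by numeral_eq_Suc.\<close>
    have "even (Suc (Suc (Suc (Suc 0))))"
      by presburger
    with 2 show ?thesis
      by (simp add: m step_index_def inner_index_def net_index_def front_index_def numeral_eq_Suc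
          upt_rec)
  next
    case 3
    have m7: "7 \<le> m"
      using 3 m by simp
    txt \<open>The orbit of 1 is 1, 2, 5, 7, ..., m - 2, 3, 4, 6, 8, ..., m - 1, 0.\<close>
    define c where
      "c k = (if k = 0 then 1 else if k = 1 then 2 else if k < r then 2 * k + 1 else if k = r then 3
              else if k < 2 * r then 2 * (k - r) + 2 else 0)" for k
    have orbit: "(step_index m 1 ^^ k) 1 = c k" if "k \<le> 2 * r" for k
      using that
    proof (induction k)
      case (Suc k)
      have "c k < m"
        using Suc.prems m by (auto simp: c_def)
      then have "step_index m 1 (c k) = c (Suc k)"
        unfolding step_index_odd[OF assms(1) m7 \<open>c k < m\<close>] using 3 m Suc.prems
        by (auto simp: c_def; presburger)
      then show ?case
        using Suc by simp
    qed (simp add: c_def)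
    have "inj_on c {0..<m}"
      unfolding inj_on_def c_def using m 3 by (auto split: if_splits; presburger)
    then have "distinct (map c [0..<m])"
      by (simp add: distinct_map)
    moreover have "map (\<lambda>k. (step_index m 1 ^^ k) 1) [0..<m] = map c [0..<m]"
      using orbit m by simp
    ultimately have "distinct (map (\<lambda>k. (step_index m 1 ^^ k) 1) [0..<m])"
      by argo
    moreover have "(step_index m 1 ^^ m) 1 = step_index m 1 (c (2 * r))"
      using orbit[of "2 * r"] m by simp
    moreover have "step_index m 1 (c (2 * r)) = 1"
      using 3 by (simp add: c_def step_index_def inner_index_def front_index_def)
    ultimately show ?thesis
      by simp
  qed
qed

lemma front_index_1_front_index_1: "front_index 1 (front_index 1 q) = q"
  by (simp add: front_index_def)

lemma front_index_1_image:
  assumes "2 \<le> m"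
  shows "front_index 1 ` {..<m} = {..<m}"
proof
  show "front_index 1 ` {..<m} \<subseteq> {..<m}"
    using assms by (auto simp: front_index_def)
  show "{..<m} \<subseteq> front_index 1 ` {..<m}"
  proof
    fix x
    assume "x \<in> {..<m}"
    then have "front_index 1 x \<in> {..<m}"
      using assms by (auto simp: front_index_def)
    then show "x \<in> front_index 1 ` {..<m}"
      by (metis front_index_1_front_index_1 imageI)
  qed
qed

lemma inner_index_eq_front_index_step_index: "inner_index m q = front_index 1 (step_index m 1 q)"
  by (simp add: step_index_def front_index_def)

lemma upt_eq_Cons_Cons_snoc:
  assumes "3 \<le> m"
  shows "[0..<m] = 0 # 1 # map (\<lambda>t. Suc (Suc t)) [0..<m - 3] @ [m - 1]"
proof -
  define n where "n = m - 3"
  have m: "m = Suc (Suc (Suc n))"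
    using assms by (simp add: n_def)
  have "[0..<Suc (Suc n)] = 0 # 1 # map (\<lambda>t. Suc (Suc t)) [0..<n]"
    by (induction n) simp_all
  then show ?thesis
    unfolding m by simp
qed

lemma head_indices_odd:
  assumes "odd m" "3 \<le> m"
  shows "head_indices m = map (\<lambda>k. front_index 1 ((step_index m 1 ^^ k) 1)) [0..<m]"
proof -
  have J: "pivot m = 1"
    using assms by (simp add: pivot_def)
  have m: "m - 1 = Suc (Suc (m - 3))"
    using assms by simp
  show ?thesis
    unfolding upt_eq_Cons_Cons_snoc[OF assms(2)] head_indices_def J m
    using assms by (simp add: inner_index_eq_front_index_step_index front_index_def)
qed

lemma final_index_odd:
  assumes "odd m" "3 \<le> m"
  shows "final_index m q = front_index 1 ((step_index m 1 ^^ m) q)"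
proof -
  have "m = Suc (Suc (Suc (m - 3)))"
    using assms by simp
  then have "(step_index m 1 ^^ m) q =
      step_index m 1 (step_index m 1 ((step_index m 1 ^^ (m - 3)) (step_index m 1 q)))"
    by (metis funpow.simps(2) funpow_Suc_right o_apply)
  then show ?thesis
    using assms by (simp add: final_index_def pivot_def inner_index_eq_front_index_step_index)
qed

lemma head_indices_final_index_odd:
  assumes "odd m" "3 \<le> m"
  shows "distinct (head_indices m) \<and> set (head_indices m) = {..<m}"
    and "q < m \<Longrightarrow> final_index m q = net_index m q"
proof -
  let ?orbit = "map (\<lambda>k. (step_index m 1 ^^ k) 1) [0..<m]"
  have bound: "step_index m 1 q < m" if "q < m" for q
    using that assms by (simp add: step_index_less)
  have orbit_set: "set ?orbit = {..<m}"
    by (rule set_orbit_eq_lessThan) (use bound assms step_index_orbit_odd[OF assms] in auto)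
  have heads: "head_indices m = map (front_index 1) ?orbit"
    by (simp add: head_indices_odd[OF assms])
  have "inj_on (front_index 1) (set ?orbit)"
    by (metis front_index_1_front_index_1 inj_onI)
  then have "distinct (map (front_index 1) ?orbit)"
    using step_index_orbit_odd[OF assms] by (simp only: distinct_map)
  moreover have "set (map (front_index 1) ?orbit) = {..<m}"
    unfolding set_map[of "front_index 1"] orbit_set using assms by (intro front_index_1_image) simp
  ultimately show "distinct (head_indices m) \<and> set (head_indices m) = {..<m}"
    unfolding heads by simp
  show "final_index m q = net_index m q" if "q < m"
    using funpow_eq_self_if_orbit[OF orbit_set _ that] step_index_orbit_odd[OF assms] that assms
    by (simp add: final_index_odd net_index_odd front_index_def)
qed

lemma head_indices_perm:
  assumes "2 \<le> m"
  shows "distinct (head_indices m) \<and> set (head_indices m) = {..<m}"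
proof -
  have "m = 2 \<or> even m \<and> 4 \<le> m \<or> odd m \<and> 3 \<le> m"
    using assms by presburger
  then consider "m = 2" | "even m" "4 \<le> m" | "odd m" "3 \<le> m"
    by blast
  then show ?thesis
  proof cases
    case 1
    then have "head_indices m = [0, 1]"
      by (simp add: head_indices_def inner_index_def net_index_def)
    then show ?thesis
      using 1 by auto
  qed (simp_all add: head_indices_perm_even head_indices_final_index_odd)
qed

lemma final_index_eq_net_index:
  assumes "2 \<le> m" "q < m"
  shows "final_index m q = net_index m q"
proof -
  have "m = 2 \<or> even m \<and> 4 \<le> m \<or> odd m \<and> 3 \<le> m"
    using assms by presburger
  then consider "m = 2" | "even m" "4 \<le> m" | "odd m" "3 \<le> m"
    by blast
  then show ?thesis
  proof cases
    case 1
    then show ?thesis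
      using assms(2) by (auto simp: final_index_def step_index_def inner_index_def net_index_def
          front_index_def less_2_cases_iff)
  qed (use assms in \<open>simp_all add: final_index_even head_indices_final_index_odd\<close>)
qed

section \<open>Blocks in index form\<close>

lemma Cons_permute_list_net_index:
  "x # permute_list (net_index (length xs)) xs =
    permute_list (inner_index (length (x # xs))) (x # xs)"
proof -
  have "inner_index (length (x # xs)) =
      (\<lambda>q. case q of 0 \<Rightarrow> 0 | Suc p \<Rightarrow> Suc (net_index (length xs) p))"
    by (simp add: fun_eq_iff inner_index_def split: nat.split)
  then show ?thesis
    by (simp add: Cons_permute_list)
qed

context
  fixes f :: nat and L :: "'a list"
  assumes long: "2 \<le> length L"
    and shorter: "\<And>xs :: 'a list. length xs = length L - 1 \<Longrightarrow>
      fst (perm_go f 0 xs) = permute_list (net_index (length L - 1)) xs"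
begin

lemma fst_perm_go_1:
  fixes M :: "'a list"
  assumes "length M = length L"
  shows "fst (perm_go f 1 M) = permute_list (inner_index (length L)) M"
proof (cases M)
  case (Cons x xs)
  then have "length L = Suc (length xs)"
    using assms by simp
  then show ?thesis
    using Cons shorter[of xs] perm_go_1_Cons[of f x xs] Cons_permute_list_net_index[of x xs] by simp
qed (use assms long in simp)

lemma move_permute_list:
  assumes "j < length L" "\<And>q. q < length L \<Longrightarrow> g q < length L"
  shows "move (permute_list g L) 0 j = permute_list (g \<circ> front_index j) L"
proof -
  have "move (permute_list g L) 0 j = permute_list (front_index j) (permute_list g L)"
    using assms(1) by (simp add: move_0_eq_permute_list)
  also have "\<dots> = permute_list (g \<circ> front_index j) L"
    by (rule permute_list_permute_list) (use assms(1) in \<open>auto simp: front_index_def\<close>)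
  finally show ?thesis .
qed

lemma level_step_permute_list:
  assumes "j < length L" "\<And>q. q < length L \<Longrightarrow> g q < length L"
  shows "level_step f j (permute_list g L) = permute_list (g \<circ> step_index (length L) j) L"
proof -
  have "level_step f j (permute_list g L) = fst (perm_go f 1 (permute_list (g \<circ> front_index j) L))"
    by (simp only: level_step_def move_permute_list[OF assms])
  also have "\<dots> = permute_list (inner_index (length L)) (permute_list (g \<circ> front_index j) L)"
    by (rule fst_perm_go_1) simp
  also have "\<dots> = permute_list (g \<circ> step_index (length L) j) L"
    by (simp add: permute_list_permute_list inner_index_less step_index_def comp_def)
  finally show ?thesis .
qed

lemma funpow_level_step_permute_list:
  assumes "j < length L" "\<And>q. q < length L \<Longrightarrow> g q < length L"
  shows "(level_step f j ^^ t) (permute_list g L) =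
    permute_list (g \<circ> (step_index (length L) j ^^ t)) L"
proof (induction t)
  case (Suc t)
  have "(level_step f j ^^ Suc t) (permute_list g L)
      = level_step f j (permute_list (g \<circ> (step_index (length L) j ^^ t)) L)"
    using Suc by (simp add: comp_def)
  also have "\<dots> = permute_list (g \<circ> (step_index (length L) j ^^ t) \<circ> step_index (length L) j) L"
    by (rule level_step_permute_list) (use assms in \<open>simp_all add: funpow_step_index_less\<close>)
  also have "\<dots> = permute_list (g \<circ> (step_index (length L) j ^^ Suc t)) L"
    by (simp only: funpow_Suc_right comp_assoc)
  finally show ?case .
qed simp

lemma hd_move_permute_list:
  assumes "j < length L" "\<And>q. q < length L \<Longrightarrow> g q < length L"
  shows "hd (move (permute_list g L) 0 j) = L ! g j"
proof -
  have "L \<noteq> []"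
    using assms(1) by auto
  then show ?thesis
    using assms by (simp add: move_permute_list hd_permute_list front_index_def)
qed

lemma block_starts_eq:
  defines "m \<equiv> length L"
  defines "Z \<equiv> \<lambda>t. permute_list (inner_index m \<circ> step_index m 1 \<circ> (step_index m (pivot m) ^^ t)) L"
  shows "block_starts f L =
      L # move (permute_list (inner_index m) L) 0 1 # map (\<lambda>t. move (Z t) 0 (pivot m)) [0..<m - 3]
      @ (if 2 < m then [move (Z (m - 3)) 0 1] else [])"
    and "final_state f L = (if 2 < m then level_step f 1 (Z (m - 3)) else Z 0)"
proof -
  have X: "fst (perm_go f 1 L) = permute_list (inner_index m) L"
    unfolding m_def by (rule fst_perm_go_1) simp
  have Y: "level_step f 1 (fst (perm_go f 1 L)) = permute_list (inner_index m \<circ> step_index m 1) L"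
    unfolding X m_def
    by (rule level_step_permute_list) (use long in \<open>simp_all add: inner_index_less\<close>)
  have Z: "(level_step f (pivot m) ^^ t) (level_step f 1 (fst (perm_go f 1 L))) = Z t" for t
    unfolding Y Z_def m_def
    by (rule funpow_level_step_permute_list)
      (use long in \<open>simp_all add: pivot_less inner_index_less step_index_less\<close>)
  show "block_starts f L =
      L # move (permute_list (inner_index m) L) 0 1 # map (\<lambda>t. move (Z t) 0 (pivot m)) [0..<m - 3]
      @ (if 2 < m then [move (Z (m - 3)) 0 1] else [])"
    unfolding block_starts_def Let_def m_def[symmetric] Z unfolding X ..
  show "final_state f L = (if 2 < m then level_step f 1 (Z (m - 3)) else Z 0)"
  proof -
    have "level_step f 1 (fst (perm_go f 1 L)) = Z 0"
      using Z[of 0] by simp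
    then show ?thesis
      unfolding final_state_def Let_def m_def[symmetric] Z by simp
  qed
qed

lemma map_hd_block_starts: "map hd (block_starts f L) = map ((!) L) (head_indices (length L))"
proof -
  have "L \<noteq> []"
    using long by auto
  then show ?thesis
    using long
    by (simp add: block_starts_eq hd_move_permute_list head_indices_def pivot_less inner_index_less
        step_index_less funpow_step_index_less hd_conv_nth)
qed

lemma final_state_eq: "final_state f L = permute_list (final_index (length L)) L"
  using long
  by (auto simp: block_starts_eq level_step_permute_list pivot_less inner_index_less step_index_less
      funpow_step_index_less final_index_def intro!: permute_list_cong)

end

theorem fst_perm_go_0:
  "length L < f \<Longrightarrow> fst (perm_go f 0 L) = permute_list (net_index (length L)) L"
proof (induction f arbitrary: L)
  case (Suc f)
  show ?case
  proof (cases "length L \<le> 1")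
    case True
    then show ?thesis
      by (cases L) (auto simp: perm_go_Suc_base permute_list_def net_index_def)
  next
    case False
    have long: "2 \<le> length L"
      using False by simp
    have shorter: "fst (perm_go f 0 xs) = permute_list (net_index (length L - 1)) xs"
      if "length xs = length L - 1" for xs :: "'a list"
    proof -
      have "length xs < f"
        using Suc.prems that long by linarith
      then show ?thesis
        using Suc.IH[of xs] that by simp
    qed
    have "final_state f L = permute_list (net_index (length L)) L"
      using long final_index_eq_net_index
      by (simp add: final_state_eq[OF long shorter] cong: permute_list_cong)
    then show ?thesis
      using False by (simp add: perm_go_Suc_0)
  qed
qed simp

lemma distinct_concat_map_Cons:
  "distinct (map h Ms) \<Longrightarrow> (\<And>M. M \<in> set Ms \<Longrightarrow> distinct (C M)) \<Longrightarrow>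
    distinct (concat (map (\<lambda>M. map ((#) (h M)) (C M)) Ms))"
proof (induction Ms)
  case (Cons M Ms)
  have "h M \<notin> h ` set Ms"
    using Cons.prems(1) by simp
  then have "set (map ((#) (h M)) (C M)) \<inter> set (concat (map (\<lambda>M. map ((#) (h M)) (C M)) Ms)) = {}"
    by auto
  moreover have "distinct (map ((#) (h M)) (C M))"
    using Cons.prems(2) by (simp add: distinct_map)
  moreover have "distinct (concat (map (\<lambda>M. map ((#) (h M)) (C M)) Ms))"
    using Cons by simp
  ultimately show ?case
    by simp
qed simp

lemma set_concat_map_Cons:
  assumes "A \<noteq> {#}" "hd ` set Ms = set_mset A" "\<And>M. M \<in> set Ms \<Longrightarrow> mset M = A"
    and "\<And>M. M \<in> set Ms \<Longrightarrow> set (C M) = permutations_of_multiset (mset (tl M))"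
  shows "set (concat (map (\<lambda>M. map ((#) (hd M)) (C M)) Ms)) = permutations_of_multiset A"
proof -
  have "mset (tl M) = A - {#hd M#}" if "M \<in> set Ms" for M
    using assms(1) assms(3)[OF that] mset_tl[of M] by auto
  then have "set (concat (map (\<lambda>M. map ((#) (hd M)) (C M)) Ms))
      = (\<Union>M\<in>set Ms. (#) (hd M) ` permutations_of_multiset (A - {#hd M#}))"
    using assms(4) by auto
  also have "\<dots> = (\<Union>x\<in>set_mset A. (#) x ` permutations_of_multiset (A - {#x#}))"
    unfolding assms(2)[symmetric] by simp
  also have "\<dots> = permutations_of_multiset A"
    by (rule permutations_of_multiset_nonempty[OF assms(1), symmetric])
  finally show ?thesis .
qed

lemma card_permutations_of_multiset_mset:
  assumes "distinct xs"
  shows "card (permutations_of_multiset (mset xs)) = fact (length xs)"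
proof -
  have "permutations_of_multiset (mset xs) = permutations_of_set (set xs)"
    using assms by (simp add: permutations_of_set_altdef mset_set_set)
  then show ?thesis
    using assms by (simp add: distinct_card)
qed

theorem perm_go_0_enumerates_permutations:
  "distinct L \<Longrightarrow> length L < f \<Longrightarrow>
    distinct (snd (perm_go f 0 L)) \<and> set (snd (perm_go f 0 L)) = permutations_of_multiset (mset L)"
proof (induction f arbitrary: L)
  case (Suc f)
  show ?case
  proof (cases "length L \<le> 1")
    case True
    then show ?thesis
      by (cases L) (auto simp: perm_go_Suc_base)
  next
    case False
    define Bs where "Bs = block_starts f L"
    have ms: "mset M = mset L" if "M \<in> set Bs" for M
      using mset_block_starts[of M f L] that False by (simp add: Bs_def)
    then have ne: "M \<noteq> []" if "M \<in> set Bs" for M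
      using that False by fastforce
    have blocks: "map (\<lambda>M. snd (perm_go f 1 M)) Bs =
        map (\<lambda>M. map ((#) (hd M)) (snd (perm_go f 0 (tl M)))) Bs"
    proof (rule map_cong)
      fix M
      assume "M \<in> set Bs"
      then show "snd (perm_go f 1 M) = map ((#) (hd M)) (snd (perm_go f 0 (tl M)))"
        using perm_go_1_Cons[of f "hd M" "tl M"] ne by simp
    qed simp
    have "snd (perm_go (Suc f) 0 L) = concat (map (\<lambda>M. snd (perm_go f 1 M)) Bs)"
      using False by (simp add: perm_go_Suc_0 Bs_def)
    also have "\<dots> = concat (map (\<lambda>M. map ((#) (hd M)) (snd (perm_go f 0 (tl M)))) Bs)"
      unfolding blocks ..
    finally have calls: "snd (perm_go (Suc f) 0 L) =
        concat (map (\<lambda>M. map ((#) (hd M)) (snd (perm_go f 0 (tl M)))) Bs)" .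
    have long: "2 \<le> length L"
      using False by simp
    have shorter: "fst (perm_go f 0 xs) = permute_list (net_index (length L - 1)) xs"
      if "length xs = length L - 1" for xs :: "'a list"
    proof -
      have "length xs < f"
        using Suc.prems(2) that long by linarith
      then show ?thesis
        using fst_perm_go_0[of xs f] that by simp
    qed
    have heads: "map hd Bs = map ((!) L) (head_indices (length L))"
      using map_hd_block_starts[OF long shorter] by (simp add: Bs_def)
    have hd_perm:
      "distinct (head_indices (length L)) \<and> set (head_indices (length L)) = {..<length L}"
      using False by (simp add: head_indices_perm)
    have heads_distinct: "distinct (map hd Bs)"
      unfolding heads using hd_perm Suc.prems(1) by (simp add: distinct_map inj_on_nth)
    have heads_set: "hd ` set Bs = set_mset (mset L)"
    proof -
      have "hd ` set Bs = (!) L ` {..<length L}"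
        using heads hd_perm by (metis list.set_map)
      also have "\<dots> = set L"
        by (auto simp: in_set_conv_nth)
      finally show ?thesis
        by simp
    qed
    have blocks_enum: "distinct (snd (perm_go f 0 (tl M))) \<and>
        set (snd (perm_go f 0 (tl M))) = permutations_of_multiset (mset (tl M))"
      if "M \<in> set Bs" for M
    proof (rule Suc.IH)
      show "distinct (tl M)"
        using ms[OF that] Suc.prems(1) by (metis distinct_tl mset_eq_imp_distinct_iff)
      have "length M = length L"
        using ms[OF that] by (metis size_mset)
      then show "length (tl M) < f"
        using Suc.prems(2) False by simp
    qed
    show ?thesis
      unfolding calls
    proof
      show "distinct (concat (map (\<lambda>M. map ((#) (hd M)) (snd (perm_go f 0 (tl M)))) Bs))"
        by (rule distinct_concat_map_Cons[OF heads_distinct]) (use blocks_enum in blast)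
      show "set (concat (map (\<lambda>M. map ((#) (hd M)) (snd (perm_go f 0 (tl M)))) Bs))
          = permutations_of_multiset (mset L)"
        by (rule set_concat_map_Cons[OF _ heads_set ms]) (use blocks_enum False in auto)
    qed
  qed
qed simp

theorem mainTheorem3:
  fixes L :: "'a list" and k :: nat
  assumes "length L = k" and "distinct L"
  shows "length (perm_calls L) = fact k
         \<and> distinct (perm_calls L)
         \<and> set (perm_calls L) = {M. mset M = mset L}"
proof -
  have "distinct (perm_calls L)" "set (perm_calls L) = permutations_of_multiset (mset L)"
    using perm_go_0_enumerates_permutations[OF assms(2), of "Suc (length L)"]
    by (simp_all add: perm_calls_def)
  moreover from this have "length (perm_calls L) = fact k"
    using assms distinct_card[of "perm_calls L"] card_permutations_of_multiset_mset[of L] by simp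
  ultimately show ?thesis
    by (simp add: permutations_of_multiset_def)
qed

end
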